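(* Let $p\ge 0$ and $n\ge 1$ be integers. For every integer $k\ge 0$ with $n\ge (p+1)k$ and every $\alpha\in C_n(p,k)$, the list $\mathcal{D}_p(\alpha)$ is suffix partitioned.
   Context: The weight of a binary word is its number of 1's. For integers $p,k\ge 0$ and $n\ge (p+1)k$, $C_n(p,k)$ is the set of binary words of length $n$ and weight $k$ such that every prefix contains at least $p$ times as many 0's as 1's (i.e. in every prefix, #0's $\ge p\cdot$ #1's). A homogeneous transposition of a binary word exchanges a 1 and a 0 such that no 1 occurs strictly between the two exchanged positions. For a set $S$ of binary words of the same length and weight and $\alpha\in S$, the list obtained by applying the greedy algorithm for $S$ to $\alpha$ is built as follows: start with the list $(\alpha)$; repeatedly, for the last word $w$ of the current list, among all words obtainable from $w$ by one homogeneous transposition that lie in $S$ and do not already occur in the list, choose the one obtained by transposing the leftmost possible 1 with (among transpositions of that 1) the leftmost possible 0, and append it; stop when no such word exists. $\mathcal{D}_p(\alpha)$ denotes the list obtained by applying the greedy algorithm for $C_n(p,k)$ to $\alpha\in C_n(p,k)$. A list is suffix partitioned if, for every word $s$, the words of the list having suffix $s$ occupy consecutive positions. *)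

theory Defs
  imports Main "HOL-Library.Sublist"
begin

text \<open>Binary words are lists of booleans: True = 1, False = 0.\<close>

definition weight :: "bool list \<Rightarrow> nat" where
  "weight w = length (filter id w)"

definition zeros :: "bool list \<Rightarrow> nat" where
  "zeros w = length (filter Not w)"

definition C :: "nat \<Rightarrow> nat \<Rightarrow> nat \<Rightarrow> bool list set" where
  "C n p k = {w. length w = n \<and> weight w = k \<and>
                 (\<forall>i \<le> n. zeros (take i w) \<ge> p * weight (take i w))}"

definition swap_pos :: "bool list \<Rightarrow> nat \<Rightarrow> nat \<Rightarrow> bool list" where
  "swap_pos w i j = w[i := w ! j, j := w ! i]"

definition hom_trans :: "bool list \<Rightarrow> nat \<Rightarrow> nat \<Rightarrow> bool" where
  "hom_trans w i j \<longleftrightarrow> i < length w \<and> j < length w \<and> w ! i \<and> \<not> w ! j \<and>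
     (\<forall>m. min i j < m \<and> m < max i j \<longrightarrow> \<not> w ! m)"

definition cands :: "bool list set \<Rightarrow> bool list list \<Rightarrow> bool list \<Rightarrow> (nat \<times> nat) set" where
  "cands S L w = {(i, j). hom_trans w i j \<and> swap_pos w i j \<in> S \<and> swap_pos w i j \<notin> set L}"

definition greedy_next :: "bool list set \<Rightarrow> bool list list \<Rightarrow> bool list \<Rightarrow> bool list option" where
  "greedy_next S L w =
     (let Cs = cands S L w in
      if Cs = {} then None
      else (let i0 = Min (fst ` Cs); j0 = Min {j. (i0, j) \<in> Cs} in
            Some (swap_pos w i0 j0)))"

text \<open>Iteration with fuel; fuel card S suffices since the list stays
  duplicate-free inside S.\<close>
fun greedy_aux :: "bool list set \<Rightarrow> nat \<Rightarrow> bool list list \<Rightarrow> bool list list" where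
  "greedy_aux S 0 L = L"
| "greedy_aux S (Suc f) L =
     (case greedy_next S L (last L) of
        None \<Rightarrow> L
      | Some w \<Rightarrow> greedy_aux S f (L @ [w]))"

definition greedy :: "bool list set \<Rightarrow> bool list \<Rightarrow> bool list list" where
  "greedy S \<alpha> = greedy_aux S (card S) [\<alpha>]"

definition D :: "nat \<Rightarrow> nat \<Rightarrow> nat \<Rightarrow> bool list \<Rightarrow> bool list list" where
  "D n p k \<alpha> = greedy (C n p k) \<alpha>"

definition suffix_partitioned :: "bool list list \<Rightarrow> bool" where
  "suffix_partitioned L \<longleftrightarrow>
     (\<forall>s a b c. a \<le> b \<and> b \<le> c \<and> c < length L \<and> suffix s (L ! a) \<and> suffix s (L ! c)
        \<longrightarrow> suffix s (L ! b))"

end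

theory Submission
  imports Defs
begin

text \<open>Split the words by their last letter. Started at \<open>u b\<close>, the greedy algorithm first behaves
  exactly like the greedy algorithm on the section of words \<open>v\<close> with \<open>v b \<in> C\<close>, started at \<open>u\<close>:
  a transposition involving the last position is never preferred to one inside the first \<open>n - 1\<close>
  letters, because the 1 it moves is further right, or it would have to jump over the 1 that the
  in-section move uses. When that section is exhausted, every admissible move changes the last
  letter; one such move is made, the algorithm then runs through the section of words ending in
  \<open>\<not> b\<close> and stops. Hence \<open>D_p(\<alpha>)\<close> is the concatenation of two greedy lists of smaller instances,
  lifted by a fixed last letter, and suffix partitioning follows by induction on \<open>n\<close>. To know
  which move crosses between the blocks and why the second block ends the list, the induction
  also records where each greedy list ends and when it exhausts \<open>C n p k\<close>.\<close>

section \<open>Letter counts and the sets \<open>C n p k\<close>\<close>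

lemma weight_Nil [simp]: "weight [] = 0"
  and weight_append [simp]: "weight (xs @ ys) = weight xs + weight ys"
  and weight_single [simp]: "weight [b] = (if b then 1 else 0)"
  and weight_replicate [simp]: "weight (replicate n b) = (if b then n else 0)"
  by (simp_all add: weight_def)

lemma zeros_Nil [simp]: "zeros [] = 0"
  and zeros_append [simp]: "zeros (xs @ ys) = zeros xs + zeros ys"
  and zeros_single [simp]: "zeros [b] = (if b then 0 else 1)"
  and zeros_replicate [simp]: "zeros (replicate n b) = (if b then 0 else n)"
  by (simp_all add: zeros_def)

lemma zeros_add_weight: "zeros w + weight w = length w"
  by (induction w) (auto simp: zeros_def weight_def)

lemma weight_eq_0_iff: "weight w = 0 \<longleftrightarrow> (\<forall>m < length w. \<not> w ! m)"
  by (auto simp: weight_def filter_empty_conv in_set_conv_nth)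

lemma weight_list_update:
  "i < length xs \<Longrightarrow> weight (xs[i := x]) + (if xs ! i then 1 else 0) = weight xs + (if x then 1 else 0)"
proof (induction xs arbitrary: i)
  case (Cons a xs)
  show ?case
  proof (cases i)
    case (Suc j)
    then show ?thesis
      using Cons.IH[of j] Cons.prems by (cases x; cases "xs ! j") (simp_all add: weight_def)
  qed (simp add: weight_def)
qed simp

lemma zeros_list_update:
  "i < length xs \<Longrightarrow> zeros (xs[i := x]) + (if xs ! i then 0 else 1) = zeros xs + (if x then 0 else 1)"
  using weight_list_update[of i xs x] zeros_add_weight[of xs] zeros_add_weight[of "xs[i := x]"]
  by (cases x; cases "xs ! i") auto

lemma C_length: "w \<in> C n p k \<Longrightarrow> length w = n"
  by (simp add: C_def)

lemma C_bound: "w \<in> C n p k \<Longrightarrow> (p + 1) * k \<le> n"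
proof -
  assume "w \<in> C n p k"
  then have "zeros w \<ge> p * k" "weight w = k" "length w = n"
    by (auto simp: C_def dest!: spec[of _ n])
  then show ?thesis
    using zeros_add_weight[of w] by simp
qed

lemma finite_C: "finite (C n p k)"
proof (rule finite_subset)
  show "C n p k \<subseteq> {xs. set xs \<subseteq> UNIV \<and> length xs = n}"
    by (auto simp: C_def)
qed (rule finite_lists_length_eq, simp)

lemma C_0: "C n p 0 = {replicate n False}"
proof -
  have "w \<in> C n p 0 \<longleftrightarrow> w = replicate n False" for w
  proof
    assume "w \<in> C n p 0"
    then have "length w = n" "weight w = 0"
      by (auto simp: C_def)
    then show "w = replicate n False"
      by (metis (full_types) weight_eq_0_iff in_set_conv_nth replicate_length_same)
  next
    assume "w = replicate n False"
    then show "w \<in> C n p 0"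
      by (auto simp: C_def)
  qed
  then show ?thesis
    by auto
qed

lemma snoc_in_C_iff:
  "v @ [b] \<in> C (Suc n) p k \<longleftrightarrow>
     v \<in> C n p (if b then k - 1 else k) \<and> (b \<longrightarrow> k \<ge> 1 \<and> (p + 1) * k \<le> Suc n)"
    (is "?L \<longleftrightarrow> ?R")
proof
  assume L: ?L
  then have len: "length v = n" and wt: "weight (v @ [b]) = k"
    and prefixes: "\<And>i. i \<le> Suc n \<Longrightarrow> p * weight (take i (v @ [b])) \<le> zeros (take i (v @ [b]))"
    by (auto simp: C_def)
  have "p * weight (take i v) \<le> zeros (take i v)" if "i \<le> n" for i
    using prefixes[of i] that len by simp
  moreover have "p * weight (v @ [b]) \<le> zeros (v @ [b])"
    using prefixes[of "Suc n"] len by simp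
  ultimately show ?R
    using wt len zeros_add_weight[of v] by (cases b) (auto simp: C_def algebra_simps)
next
  assume R: ?R
  then have len: "length v = n" and wt: "weight v = (if b then k - 1 else k)"
    and prefixes: "\<And>i. i \<le> n \<Longrightarrow> p * weight (take i v) \<le> zeros (take i v)"
    by (auto simp: C_def)
  have "p * weight (v @ [b]) \<le> zeros (v @ [b])"
  proof (cases b)
    case True
    then show ?thesis
      using R wt zeros_add_weight[of v] len by (auto simp: algebra_simps)
  next
    case False
    then show ?thesis
      using prefixes[of n] len wt by simp
  qed
  then have "p * weight (take i (v @ [b])) \<le> zeros (take i (v @ [b]))" if "i \<le> Suc n" for i
    using prefixes[of i] that len by (cases "i \<le> n") auto
  moreover have "weight (v @ [b]) = k"
    using wt R by (cases b) auto
  ultimately show ?L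
    using len by (simp add: C_def)
qed

lemma C_Suc_eq:
  assumes "k \<ge> 1" "(p + 1) * k \<le> Suc n"
  shows "C (Suc n) p k = (\<lambda>v. v @ [True]) ` C n p (k - 1) \<union> (\<lambda>v. v @ [False]) ` C n p k"
proof (intro set_eqI iffI)
  fix w
  assume "w \<in> C (Suc n) p k"
  moreover obtain v b where "w = v @ [b]"
    using calculation C_length by (metis length_Suc_conv_rev)
  ultimately show "w \<in> (\<lambda>v. v @ [True]) ` C n p (k - 1) \<union> (\<lambda>v. v @ [False]) ` C n p k"
    using snoc_in_C_iff[of v b n p k] by (cases b) auto
qed (use assms snoc_in_C_iff in auto)

section \<open>Greedy runs\<close>

text \<open>A fuel-free description of \<open>greedy_aux\<close>, which makes runs easy to compose.\<close>

inductive greedy_run :: "bool list set \<Rightarrow> bool list list \<Rightarrow> bool list list \<Rightarrow> bool" for S where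
  greedy_run_stop: "greedy_next S L (last L) = None \<Longrightarrow> greedy_run S L L"
| greedy_run_step: "greedy_next S L (last L) = Some w \<Longrightarrow> greedy_run S (L @ [w]) R \<Longrightarrow> greedy_run S L R"

lemma greedy_run_unique: "greedy_run S L R \<Longrightarrow> greedy_run S L R' \<Longrightarrow> R = R'"
proof (induction rule: greedy_run.induct)
  case (greedy_run_stop L)
  from greedy_run_stop.prems show ?case
    by cases (use greedy_run_stop.hyps in auto)
next
  case (greedy_run_step L w R)
  from greedy_run_step.prems show ?case
    by cases (use greedy_run_step in auto)
qed

lemma finite_cands: "finite (cands S L w)"
proof -
  have "cands S L w \<subseteq> {..<length w} \<times> {..<length w}"
    by (auto simp: cands_def hom_trans_def)
  then show ?thesis
    by (rule finite_subset) simp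
qed

lemma greedy_next_None_iff: "greedy_next S L w = None \<longleftrightarrow> cands S L w = {}"
  by (simp add: greedy_next_def Let_def)

lemma greedy_next_SomeE:
  assumes "greedy_next S L w = Some v"
  obtains i0 j0 where "(i0, j0) \<in> cands S L w" "v = swap_pos w i0 j0"
    "\<And>i j. (i, j) \<in> cands S L w \<Longrightarrow> i0 < i \<or> (i = i0 \<and> j0 \<le> j)"
proof -
  let ?Cs = "cands S L w"
  define i0 where "i0 = Min (fst ` ?Cs)"
  define j0 where "j0 = Min {j. (i0, j) \<in> ?Cs}"
  have ne: "?Cs \<noteq> {}"
    using assms by (auto simp: greedy_next_def Let_def split: if_splits)
  have v: "v = swap_pos w i0 j0"
    using assms ne by (simp add: greedy_next_def Let_def i0_def j0_def)
  have "i0 \<in> fst ` ?Cs"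
    unfolding i0_def using ne finite_cands by (intro Min_in) auto
  then have ne2: "{j. (i0, j) \<in> ?Cs} \<noteq> {}"
    by force
  have fin2: "finite {j. (i0, j) \<in> ?Cs}"
    by (rule finite_subset[of _ "snd ` ?Cs"]) (force, simp add: finite_cands)
  have "j0 \<in> {j. (i0, j) \<in> ?Cs}"
    unfolding j0_def by (rule Min_in[OF fin2 ne2])
  moreover have "i0 < i \<or> (i = i0 \<and> j0 \<le> j)" if "(i, j) \<in> ?Cs" for i j
  proof -
    have "i0 \<le> i"
      unfolding i0_def using that finite_cands by (intro Min_le) force+
    moreover have "i = i0 \<Longrightarrow> j0 \<le> j"
      unfolding j0_def using that fin2 by (intro Min_le) auto
    ultimately show ?thesis
      by linarith
  qed
  ultimately show ?thesis
    using v that by blast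
qed

lemma greedy_next_Some:
  assumes "greedy_next S L w = Some v"
  shows "v \<in> S" "v \<notin> set L"
  by (rule greedy_next_SomeE[OF assms], simp add: cands_def)+

lemma greedy_next_eqI:
  assumes mem: "(i0, j0) \<in> cands S L w"
    and least: "\<And>i j. (i, j) \<in> cands S L w \<Longrightarrow> i0 < i \<or> (i = i0 \<and> j0 \<le> j)"
  shows "greedy_next S L w = Some (swap_pos w i0 j0)"
proof -
  let ?Cs = "cands S L w"
  have "Min (fst ` ?Cs) = i0"
    using mem least finite_cands by (intro Min_eqI) force+
  moreover have "Min {j. (i0, j) \<in> ?Cs} = j0"
  proof (rule Min_eqI)
    show "finite {j. (i0, j) \<in> ?Cs}"
      by (rule finite_subset[of _ "snd ` ?Cs"]) (force, simp add: finite_cands)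
  qed (use mem least in force)+
  ultimately show ?thesis
    using mem by (auto simp: greedy_next_def Let_def)
qed

lemma greedy_run_nonempty: "greedy_run S L R \<Longrightarrow> L \<noteq> [] \<Longrightarrow> R \<noteq> []"
  by (induction rule: greedy_run.induct) auto

lemma greedy_run_subset: "greedy_run S L R \<Longrightarrow> set L \<subseteq> S \<Longrightarrow> set R \<subseteq> S"
  by (induction rule: greedy_run.induct) (auto dest: greedy_next_Some)

lemma greedy_run_last_in: "greedy_run S [\<alpha>] R \<Longrightarrow> \<alpha> \<in> S \<Longrightarrow> last R \<in> S"
  using greedy_run_nonempty[of S "[\<alpha>]" R] greedy_run_subset[of S "[\<alpha>]" R] last_in_set[of R] by auto

lemma greedy_run_stuck: "greedy_run S L R \<Longrightarrow> cands S R (last R) = {}"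
  by (induction rule: greedy_run.induct) (simp_all add: greedy_next_None_iff)

lemma greedy_run_greedy_aux:
  assumes "finite S" "distinct L" "set L \<subseteq> S" "L \<noteq> []" "card S \<le> f + length L"
  shows "greedy_run S L (greedy_aux S f L)"
  using assms(2-5)
proof (induction f arbitrary: L)
  case 0
  then have "card (set L) = card S"
    using distinct_card[of L] card_mono[OF assms(1) "0.prems"(2)] by simp
  then have "set L = S"
    using card_subset_eq[OF assms(1) "0.prems"(2)] by simp
  then have "cands S L (last L) = {}"
    by (auto simp: cands_def)
  then show ?case
    by (simp add: greedy_next_None_iff greedy_run_stop)
next
  case (Suc f)
  show ?case
  proof (cases "greedy_next S L (last L)")
    case None
    then show ?thesis
      by (simp add: greedy_run_stop)
  next
    case (Some w)
    then have "greedy_run S (L @ [w]) (greedy_aux S f (L @ [w]))"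
      using Suc greedy_next_Some[OF Some] by (intro Suc.IH) auto
    then show ?thesis
      using Some by (simp add: greedy_run_step)
  qed
qed

lemma greedy_eq_greedy_run:
  assumes "finite S" "\<alpha> \<in> S" "greedy_run S [\<alpha>] R"
  shows "greedy S \<alpha> = R"
proof -
  have "greedy_run S [\<alpha>] (greedy S \<alpha>)"
    unfolding greedy_def using assms(1,2) card_mono[of S "{\<alpha>}"]
    by (intro greedy_run_greedy_aux) auto
  then show ?thesis
    using assms(3) greedy_run_unique by blast
qed

section \<open>Lifting greedy runs by a last letter\<close>

abbreviation snoc_each :: "bool \<Rightarrow> bool list list \<Rightarrow> bool list list" where
  "snoc_each c L \<equiv> map (\<lambda>v. v @ [c]) L"

abbreviation snoc_section :: "bool list set \<Rightarrow> bool \<Rightarrow> bool list set" where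
  "snoc_section S c \<equiv> {v. v @ [c] \<in> S}"

lemma hom_trans_snoc:
  "i < length u \<Longrightarrow> j < length u \<Longrightarrow> hom_trans (u @ [c]) i j \<longleftrightarrow> hom_trans u i j"
  by (auto simp: hom_trans_def nth_append)

lemma swap_pos_snoc:
  "i < length u \<Longrightarrow> j < length u \<Longrightarrow> swap_pos (u @ [c]) i j = swap_pos u i j @ [c]"
  by (simp add: swap_pos_def nth_append list_update_append)

lemma swap_pos_snoc_last_left:
  "j < length u \<Longrightarrow> swap_pos (u @ [c]) (length u) j = u[j := c] @ [u ! j]"
  by (simp add: swap_pos_def nth_append list_update_append)

lemma swap_pos_snoc_last_right:
  "i < length u \<Longrightarrow> swap_pos (u @ [c]) i (length u) = u[i := c] @ [u ! i]"
  by (simp add: swap_pos_def nth_append list_update_append)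

text \<open>Below, the list built so far consists of a block of words ending in \<open>\<not> c\<close>, followed by
  the lifted greedy list \<open>Q\<close> of the section of words ending in \<open>c\<close>.\<close>

lemma cands_snoc_iff:
  assumes "i < length u" "j < length u"
  shows "(i, j) \<in> cands S (snoc_each (\<not> c) P @ snoc_each c Q) (u @ [c])
     \<longleftrightarrow> (i, j) \<in> cands (snoc_section S c) Q u"
  using assms by (auto simp: cands_def hom_trans_snoc swap_pos_snoc)

lemma greedy_next_snoc:
  assumes "greedy_next (snoc_section S c) Q u = Some u'"
  shows "greedy_next S (snoc_each (\<not> c) P @ snoc_each c Q) (u @ [c]) = Some (u' @ [c])"
proof -
  let ?L = "snoc_each (\<not> c) P @ snoc_each c Q"
  obtain i0 j0 where cand: "(i0, j0) \<in> cands (snoc_section S c) Q u" and u': "u' = swap_pos u i0 j0"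
    and least: "\<And>i j. (i, j) \<in> cands (snoc_section S c) Q u \<Longrightarrow> i0 < i \<or> (i = i0 \<and> j0 \<le> j)"
    using greedy_next_SomeE[OF assms] by blast
  have i0: "i0 < length u" "j0 < length u" "u ! i0"
    using cand by (auto simp: cands_def hom_trans_def)
  have "i0 < i \<or> (i = i0 \<and> j0 \<le> j)" if ij: "(i, j) \<in> cands S ?L (u @ [c])" for i j
  proof -
    have ht: "hom_trans (u @ [c]) i j"
      using ij by (simp add: cands_def)
    then consider "i < length u" "j < length u" | "i = length u" | "j = length u" "i < length u"
      unfolding hom_trans_def by fastforce
    then show ?thesis
    proof cases
      case 1
      then show ?thesis
        using least ij cands_snoc_iff by blast
    next
      case 3
      \<comment> \<open>the 1 at \<open>i0\<close> would lie strictly between \<open>i\<close> and the last position\<close>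
      have "\<not> i < i0"
        using ht 3 i0 by (auto simp: hom_trans_def nth_append)
      then show ?thesis
        using 3 i0 by linarith
    qed (use i0 in simp)
  qed
  then have "greedy_next S ?L (u @ [c]) = Some (swap_pos (u @ [c]) i0 j0)"
    using cand cands_snoc_iff[OF i0(1,2)] by (intro greedy_next_eqI) blast+
  then show ?thesis
    using u' i0 swap_pos_snoc by simp
qed

lemma greedy_run_snoc:
  assumes "greedy_run (snoc_section S c) Q R'" "Q \<noteq> []"
    "greedy_run S (snoc_each (\<not> c) P @ snoc_each c R') R"
  shows "greedy_run S (snoc_each (\<not> c) P @ snoc_each c Q) R"
  using assms
proof (induction rule: greedy_run.induct)
  case (greedy_run_step L w R2)
  have "greedy_next S (snoc_each (\<not> c) P @ snoc_each c L) (last L @ [c]) = Some (w @ [c])"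
    using greedy_next_snoc greedy_run_step.hyps(1) by blast
  moreover have "last (snoc_each (\<not> c) P @ snoc_each c L) = last L @ [c]"
    using greedy_run_step.prems by (simp add: last_map)
  moreover have "greedy_run S (snoc_each (\<not> c) P @ snoc_each c (L @ [w])) R"
    using greedy_run_step.IH greedy_run_step.prems by simp
  ultimately show ?case
    by (auto intro: greedy_run.greedy_run_step)
qed simp

lemma cands_snoc_stuck:
  assumes "cands (snoc_section S c) Q u = {}"
    and ij: "(i, j) \<in> cands S (snoc_each (\<not> c) P @ snoc_each c Q) (u @ [c])"
  shows "(i = length u \<and> j < length u \<or> j = length u \<and> i < length u) \<and>
    (\<exists>v. swap_pos (u @ [c]) i j = v @ [\<not> c])"
proof -
  have ht: "hom_trans (u @ [c]) i j"
    using ij by (simp add: cands_def)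
  have "\<not> (i < length u \<and> j < length u)"
    using assms cands_snoc_iff by blast
  then have pos: "i = length u \<and> j < length u \<or> j = length u \<and> i < length u"
    using ht by (auto simp: hom_trans_def less_Suc_eq)
  then have "\<exists>v. swap_pos (u @ [c]) i j = v @ [\<not> c]"
    using ht swap_pos_snoc_last_left swap_pos_snoc_last_right
    by (auto simp: hom_trans_def nth_append split: if_splits)
  with pos show ?thesis
    by blast
qed

lemma greedy_next_snoc_exhausted:
  assumes "cands (snoc_section S c) Q u = {}" "snoc_section S (\<not> c) \<subseteq> set P"
  shows "greedy_next S (snoc_each (\<not> c) P @ snoc_each c Q) (u @ [c]) = None"
proof -
  have "(i, j) \<notin> cands S (snoc_each (\<not> c) P @ snoc_each c Q) (u @ [c])" for i j
    using cands_snoc_stuck[OF assms(1)] assms(2) by (fastforce simp: cands_def)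
  then show ?thesis
    by (auto simp: greedy_next_None_iff)
qed

lemma greedy_next_snoc_True_blocked:
  assumes "cands (snoc_section S True) Q u = {}" "u \<noteq> []" "last u"
  shows "greedy_next S (snoc_each False P @ snoc_each True Q) (u @ [True]) = None"
proof -
  have "(i, j) \<notin> cands S (snoc_each False P @ snoc_each True Q) (u @ [True])" for i j
  proof
    assume ij: "(i, j) \<in> cands S (snoc_each False P @ snoc_each True Q) (u @ [True])"
    then have ht: "hom_trans (u @ [True]) i j"
      by (simp add: cands_def)
    have ij': "(i, j) \<in> cands S (snoc_each (\<not> True) P @ snoc_each True Q) (u @ [True])"
      using ij by simp
    have "i = length u" "j < length u"
      using cands_snoc_stuck[OF assms(1) ij'] ht by (auto simp: hom_trans_def nth_append)
    moreover have "j \<noteq> length u - 1"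
      using ht \<open>j < length u\<close> assms(2,3) by (auto simp: hom_trans_def nth_append last_conv_nth)
    ultimately show False
      using ht assms(2,3) by (auto simp: hom_trans_def nth_append last_conv_nth dest!: spec[of _ "length u - 1"])
  qed
  then show ?thesis
    by (auto simp: greedy_next_None_iff)
qed

lemma greedy_run_one_block:
  assumes "greedy_run (snoc_section S c) [u] R1"
    and "greedy_next S (snoc_each c R1) (last R1 @ [c]) = None"
  shows "greedy_run S [u @ [c]] (snoc_each c R1)"
proof -
  have "R1 \<noteq> []"
    using greedy_run_nonempty[OF assms(1)] by simp
  then have "greedy_run S (snoc_each c R1) (snoc_each c R1)"
    using assms(2) by (intro greedy_run_stop) (simp add: last_map)
  then show ?thesis
    using greedy_run_snoc[OF assms(1), of "[]"] by simp
qed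

lemma greedy_run_two_blocks:
  assumes run1: "greedy_run (snoc_section S c) [u] R1"
    and run2: "greedy_run (snoc_section S (\<not> c)) [w] R2"
    and cross: "greedy_next S (snoc_each c R1) (last R1 @ [c]) = Some (w @ [\<not> c])"
    and stop: "greedy_next S (snoc_each c R1 @ snoc_each (\<not> c) R2) (last R2 @ [\<not> c]) = None"
  shows "greedy_run S [u @ [c]] (snoc_each c R1 @ snoc_each (\<not> c) R2)"
proof -
  let ?R = "snoc_each c R1 @ snoc_each (\<not> c) R2"
  have ne: "R1 \<noteq> []" "R2 \<noteq> []"
    using greedy_run_nonempty run1 run2 by simp_all
  then have "greedy_run S ?R ?R"
    using stop by (intro greedy_run_stop) (simp add: last_map)
  then have "greedy_run S (snoc_each c R1 @ [w @ [\<not> c]]) ?R"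
    using greedy_run_snoc[OF run2, of "R1"] by simp
  moreover have "greedy_next S (snoc_each c R1) (last (snoc_each c R1)) = Some (w @ [\<not> c])"
    using cross ne by (simp add: last_map)
  ultimately have "greedy_run S (snoc_each c R1) ?R"
    by (blast intro: greedy_run_step)
  then show ?thesis
    using greedy_run_snoc[OF run1, of "[]"] by simp
qed

section \<open>Suffix partitioned lists\<close>

lemma suffix_partitioned_singleton: "suffix_partitioned [w]"
  by (auto simp: suffix_partitioned_def)

lemma suffix_partitioned_snoc_each:
  assumes "suffix_partitioned R"
  shows "suffix_partitioned (snoc_each c R)"
  unfolding suffix_partitioned_def
proof (intro allI impI)
  fix s a b d
  assume h: "a \<le> b \<and> b \<le> d \<and> d < length (snoc_each c R) \<and>
    suffix s (snoc_each c R ! a) \<and> suffix s (snoc_each c R ! d)"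
  then have lt: "a < length R" "b < length R" "d < length R"
    by auto
  show "suffix s (snoc_each c R ! b)"
  proof (cases "s = []")
    case False
    then obtain s' where s: "s = s' @ [c]" "suffix s' (R ! a)" "suffix s' (R ! d)"
      using h lt by auto
    then have "suffix s' (R ! b)"
      using assms h lt unfolding suffix_partitioned_def by blast
    then show ?thesis
      using s lt by simp
  qed simp
qed

lemma suffix_partitioned_append:
  assumes "suffix_partitioned Y" "suffix_partitioned Z"
    and disjoint: "\<And>s y z. y \<in> set Y \<Longrightarrow> z \<in> set Z \<Longrightarrow> suffix s y \<Longrightarrow> suffix s z \<Longrightarrow> s = []"
  shows "suffix_partitioned (Y @ Z)"
  unfolding suffix_partitioned_def
proof (intro allI impI)
  fix s a b d
  assume "a \<le> b \<and> b \<le> d \<and> d < length (Y @ Z) \<and> suffix s ((Y @ Z) ! a) \<and> suffix s ((Y @ Z) ! d)"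
  then have ord: "a \<le> b" "b \<le> d" "d < length Y + length Z"
    and sa: "suffix s ((Y @ Z) ! a)" and sd: "suffix s ((Y @ Z) ! d)"
    by auto
  consider "d < length Y" | "a < length Y" "\<not> d < length Y" | "\<not> a < length Y"
    by linarith
  then show "suffix s ((Y @ Z) ! b)"
  proof cases
    case 1
    then have "suffix s (Y ! a)" "suffix s (Y ! d)" "b < length Y"
      using ord sa sd by (simp_all add: nth_append)
    then have "suffix s (Y ! b)"
      using assms(1) ord 1 unfolding suffix_partitioned_def by blast
    then show ?thesis
      using \<open>b < length Y\<close> by (simp add: nth_append)
  next
    case 2
    then have "s = []"
      using disjoint[of "Y ! a" "Z ! (d - length Y)" s] ord sa sd by (simp add: nth_append)
    then show ?thesis
      by simp
  next
    case 3
    then have "a - length Y \<le> b - length Y" "b - length Y \<le> d - length Y" "d - length Y < length Z"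
      "suffix s (Z ! (a - length Y))" "suffix s (Z ! (d - length Y))"
      using ord sa sd by (auto simp: nth_append)
    then have "suffix s (Z ! (b - length Y))"
      using assms(2) unfolding suffix_partitioned_def by blast
    then show ?thesis
      using 3 ord by (simp add: nth_append)
  qed
qed

lemma suffix_partitioned_two_blocks:
  assumes "suffix_partitioned R1" "suffix_partitioned R2" "c \<noteq> d"
  shows "suffix_partitioned (snoc_each c R1 @ snoc_each d R2)"
proof (rule suffix_partitioned_append)
  fix s y z
  assume "y \<in> set (snoc_each c R1)" "z \<in> set (snoc_each d R2)" "suffix s y" "suffix s z"
  then show "s = []"
    using assms(3) by auto
qed (use assms suffix_partitioned_snoc_each in blast)+

text \<open>\<open>ones_end e\<close> is the position just after the last 1 of \<open>e\<close> (\<open>0\<close> if there is none).\<close>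

definition ones_end :: "bool list \<Rightarrow> nat" where
  "ones_end e = length (dropWhile Not (rev e))"

lemma ones_end_Nil [simp]: "ones_end [] = 0"
  and ones_end_snoc_True [simp]: "ones_end (e @ [True]) = Suc (length e)"
  and ones_end_snoc_False [simp]: "ones_end (e @ [False]) = ones_end e"
  by (simp_all add: ones_end_def)

lemma ones_end_le_length: "ones_end e \<le> length e"
proof (induction e rule: rev_induct)
  case (snoc x e)
  then show ?case
    by (cases x) auto
qed simp

lemma nth_ge_ones_end: "ones_end e \<le> m \<Longrightarrow> m < length e \<Longrightarrow> \<not> e ! m"
proof (induction e rule: rev_induct)
  case (snoc x e)
  then show ?case
    by (cases x) (auto simp: nth_append less_Suc_eq)
qed simp

lemma ones_end_le: "(\<And>m. j \<le> m \<Longrightarrow> m < length e \<Longrightarrow> \<not> e ! m) \<Longrightarrow> ones_end e \<le> j"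
proof (induction e rule: rev_induct)
  case (snoc x e)
  show ?case
  proof (cases x)
    case True
    then show ?thesis
      using snoc.prems[of "length e"] by (cases "j \<le> length e") auto
  next
    case False
    have "\<not> e ! m" if "j \<le> m" "m < length e" for m
      using snoc.prems[of m] that by (simp add: nth_append)
    then show ?thesis
      using snoc.IH False by simp
  qed
qed simp

lemma nth_ones_end_minus_1: "ones_end e > 0 \<Longrightarrow> e ! (ones_end e - 1)"
proof (induction e rule: rev_induct)
  case (snoc x e)
  then show ?case
    using ones_end_le_length[of e] by (cases x) (auto simp: nth_append)
qed simp

lemma ones_end_pos: "weight e > 0 \<Longrightarrow> ones_end e > 0"
proof (induction e rule: rev_induct)
  case (snoc x e)
  then show ?case
    by (cases x) auto
qed simp

lemma weight_take_ones_end: "ones_end e \<le> i \<Longrightarrow> weight (take i e) = weight e"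
proof -
  assume "ones_end e \<le> i"
  then have "weight (drop i e) = 0"
    using nth_ge_ones_end[of e] by (auto simp: weight_eq_0_iff)
  then show ?thesis
    using weight_append[of "take i e" "drop i e"] by simp
qed

definition sorted_word :: "nat \<Rightarrow> nat \<Rightarrow> bool list" where
  "sorted_word n k = replicate (n - k) False @ replicate k True"

lemma sorted_word_0: "sorted_word n 0 = replicate n False"
  by (simp add: sorted_word_def)

lemma sorted_word_Suc: "k \<le> n \<Longrightarrow> sorted_word (Suc n) (Suc k) = sorted_word n k @ [True]"
  by (simp add: sorted_word_def replicate_append_same Suc_diff_le)

lemma length_sorted_word: "k \<le> n \<Longrightarrow> length (sorted_word n k) = n"
  by (simp add: sorted_word_def)

lemma sorted_word_in_C: "(p + 1) * k \<le> n \<Longrightarrow> sorted_word n k \<in> C n p k"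
proof (induction n arbitrary: k)
  case (Suc n)
  show ?case
  proof (cases k)
    case (Suc k')
    then have "sorted_word n k' \<in> C n p k'"
      using Suc.prems by (intro Suc.IH) simp
    then show ?thesis
      using Suc Suc.prems sorted_word_Suc[of k' n] snoc_in_C_iff by simp
  qed (simp add: C_0 sorted_word_0)
qed (simp add: C_0 sorted_word_0)

lemma last_sorted_word: "1 \<le> k \<Longrightarrow> k \<le> n \<Longrightarrow> sorted_word n k \<noteq> [] \<and> last (sorted_word n k)"
  by (simp add: sorted_word_def)

lemma ones_end_sorted_word: "1 \<le> k \<Longrightarrow> k \<le> n \<Longrightarrow> ones_end (sorted_word n k) = n"
  by (cases n; cases k) (simp_all add: sorted_word_Suc length_sorted_word)

lemma snoc_section_C_True:
  "k \<ge> 1 \<Longrightarrow> (p + 1) * k \<le> Suc n \<Longrightarrow> snoc_section (C (Suc n) p k) True = C n p (k - 1)"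
  using snoc_in_C_iff by auto

lemma snoc_section_C_False: "snoc_section (C (Suc n) p k) False = C n p k"
  using snoc_in_C_iff by auto

lemma C_update_False:
  assumes e: "e \<in> C n p k" and i: "i < n" "e ! i"
  shows "e[i := False] \<in> C n p (k - 1)"
proof -
  have len: "length e = n"
    using e by (simp add: C_def)
  have "p * weight (take m (e[i := False])) \<le> zeros (take m (e[i := False]))" if "m \<le> n" for m
  proof (cases "i < m")
    case True
    then have "i < length (take m e)" "take m e ! i"
      using i len by simp_all
    then have "weight (take m (e[i := False])) + 1 = weight (take m e)"
      "zeros (take m (e[i := False])) = zeros (take m e) + 1"
      using weight_list_update[of i "take m e" False] zeros_list_update[of i "take m e" False]
      by (simp_all add: take_update_swap)
    moreover have "p * weight (take m e) \<le> zeros (take m e)"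
      using e that by (simp add: C_def)
    ultimately show ?thesis
      using mult_le_mono2[of "weight (take m (e[i := False]))" "weight (take m e)" p] by linarith
  next
    case False
    then show ?thesis
      using e that by (simp add: C_def take_update_swap list_update_beyond)
  qed
  moreover have "weight (e[i := False]) + 1 = k"
    using weight_list_update[of i e False] e i len by (simp add: C_def)
  ultimately show ?thesis
    using len by (auto simp: C_def)
qed

lemma update_True_in_C_iff:
  assumes e: "e \<in> C n p (k - 1)" and k: "k \<ge> 1" and q: "ones_end e \<le> q" "q < n"
  shows "e[q := True] \<in> C n p k \<longleftrightarrow> (p + 1) * k \<le> Suc q"
proof -
  have len: "length e = n" and wt: "weight e = k - 1"
    using e by (auto simp: C_def)
  have nq: "\<not> e ! q"
    using nth_ge_ones_end q len by simp
  have long: "weight (take m (e[q := True])) = k \<and> zeros (take m (e[q := True])) + k = m"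
    if "q < m" "m \<le> n" for m
  proof -
    have "q < length (take m e)" "weight (take m e) = k - 1"
      using that len q weight_take_ones_end[of e m] wt by simp_all
    then have "weight (take m (e[q := True])) = k"
      using weight_list_update[of q "take m e" True] nq k by (simp add: take_update_swap)
    then show ?thesis
      using zeros_add_weight[of "take m (e[q := True])"] that len by simp
  qed
  have short: "take m (e[q := True]) = take m e" if "m \<le> q" for m
    using that by (simp add: take_update_swap list_update_beyond)
  show ?thesis
  proof
    assume "e[q := True] \<in> C n p k"
    then have "p * weight (take (Suc q) (e[q := True])) \<le> zeros (take (Suc q) (e[q := True]))"
      using q by (simp add: C_def)
    then show "(p + 1) * k \<le> Suc q"
      using long[of "Suc q"] q by simp
  next
    assume bound: "(p + 1) * k \<le> Suc q"
    have "p * weight (take m (e[q := True])) \<le> zeros (take m (e[q := True]))" if "m \<le> n" for m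
    proof (cases "m \<le> q")
      case True
      then show ?thesis
        using short e that by (simp add: C_def)
    next
      case False
      then show ?thesis
        using long[of m] that bound by (simp add: algebra_simps)
    qed
    moreover have "weight (e[q := True]) = k"
      using long[of n] q len by simp
    ultimately show "e[q := True] \<in> C n p k"
      using len by (simp add: C_def)
  qed
qed

definition drop_last_one :: "bool list \<Rightarrow> bool list" where
  "drop_last_one e = e[ones_end e - 1 := False]"

lemma drop_last_one_in_C:
  assumes "e \<in> C n p k" "k \<ge> 1"
  shows "drop_last_one e \<in> C n p (k - 1)"
proof -
  have "ones_end e > 0" "length e = n"
    using assms ones_end_pos[of e] by (auto simp: C_def)
  then show ?thesis
    unfolding drop_last_one_def using assms(1) ones_end_le_length[of e] nth_ones_end_minus_1[of e]
    by (intro C_update_False) simp_all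
qed

lemma drop_last_one_snoc_True: "drop_last_one (e @ [True]) = e @ [False]"
  by (simp add: drop_last_one_def)

lemma drop_last_one_snoc_False: "weight e > 0 \<Longrightarrow> drop_last_one (e @ [False]) = drop_last_one e @ [False]"
proof -
  assume "weight e > 0"
  then have "ones_end e - 1 < length e"
    using ones_end_pos[of e] ones_end_le_length[of e] by linarith
  then show ?thesis
    by (simp add: drop_last_one_def list_update_append)
qed

lemma drop_last_one_ne_sorted_word:
  assumes e: "e \<in> C n p k" and k: "k \<ge> 2"
  shows "drop_last_one e \<noteq> sorted_word n (k - 1)"
proof
  assume eq: "drop_last_one e = sorted_word n (k - 1)"
  have len: "length e = n" and pos: "ones_end e > 0"
    using e k ones_end_pos[of e] by (auto simp: C_def)
  have "k \<le> n"
    using C_bound[OF e] by (metis add.commute le_add1 mult_le_mono1 mult_1 order_trans)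
  then have "last (sorted_word n (k - 1))" "length (sorted_word n (k - 1)) = n" "n \<noteq> 0"
    using k last_sorted_word[of "k - 1" n] length_sorted_word[of "k - 1" n] by auto
  then have "drop_last_one e ! (n - 1)"
    using eq by (metis last_conv_nth list.size(3))
  moreover have "\<not> drop_last_one e ! (n - 1)"
    using nth_ge_ones_end[of e "n - 1"] pos ones_end_le_length[of e] len \<open>k \<le> n\<close> k
    by (cases "ones_end e = n") (auto simp: drop_last_one_def)
  ultimately show False
    by simp
qed

text \<open>By \<open>update_True_in_C_iff\<close>, this is the leftmost position after the last 1 at which
  a 1 can be added without leaving \<open>C\<close>.\<close>

definition insert_one :: "nat \<Rightarrow> nat \<Rightarrow> bool list \<Rightarrow> bool list" where
  "insert_one p k e = e[max (ones_end e) ((p + 1) * k - 1) := True]"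

section \<open>Moves between the two blocks\<close>

lemma hom_trans_snoc_True_last:
  "hom_trans (e @ [True]) (length e) j \<longleftrightarrow> j < length e \<and> ones_end e \<le> j"
proof
  assume ht: "hom_trans (e @ [True]) (length e) j"
  then have j: "j < length e" "\<not> e ! j"
    by (auto simp: hom_trans_def nth_append split: if_splits)
  have "\<not> e ! m" if "j \<le> m" "m < length e" for m
    using ht j that by (cases "m = j") (auto simp: hom_trans_def nth_append dest!: spec[of _ m])
  then show "j < length e \<and> ones_end e \<le> j"
    using j ones_end_le by blast
next
  assume "j < length e \<and> ones_end e \<le> j"
  then show "hom_trans (e @ [True]) (length e) j"
    using nth_ge_ones_end[of e] by (auto simp: hom_trans_def nth_append)
qed

lemma hom_trans_snoc_False_last:
  assumes "weight e > 0"
  shows "hom_trans (e @ [False]) i (length e) \<longleftrightarrow> i = ones_end e - 1"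
proof
  assume ht: "hom_trans (e @ [False]) i (length e)"
  then have i: "i < length e" "e ! i"
    by (auto simp: hom_trans_def nth_append split: if_splits)
  have "\<not> e ! m" if "Suc i \<le> m" "m < length e" for m
    using ht that by (auto simp: hom_trans_def nth_append dest!: spec[of _ m])
  then have "ones_end e \<le> Suc i"
    by (rule ones_end_le)
  moreover have "\<not> ones_end e \<le> i"
    using nth_ge_ones_end[of e i] i by auto
  ultimately show "i = ones_end e - 1"
    by simp
next
  assume i: "i = ones_end e - 1"
  have "ones_end e > 0"
    using ones_end_pos assms by simp
  then show "hom_trans (e @ [False]) i (length e)"
    using i ones_end_le_length[of e] nth_ones_end_minus_1[of e] nth_ge_ones_end[of e]
    by (auto simp: hom_trans_def nth_append)
qed

text \<open>The move out of an exhausted block of words ending in 1: the last 1 jumps to the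
  leftmost admissible 0, which is where \<open>insert_one\<close> puts it.\<close>

lemma greedy_next_cross_True:
  assumes e: "e \<in> C n p (k - 1)" and k: "k \<ge> 1" and bound: "(p + 1) * k \<le> n"
    and end_e: "ones_end e < n" and stuck: "cands (C n p (k - 1)) Q e = {}"
  shows "greedy_next (C (Suc n) p k) (snoc_each True Q) (e @ [True]) = Some (insert_one p k e @ [False])"
proof -
  let ?S = "C (Suc n) p k" and ?L = "snoc_each (\<not> True) [] @ snoc_each True Q"
  let ?q = "max (ones_end e) ((p + 1) * k - 1)"
  have len: "length e = n"
    using e by (simp add: C_def)
  have sec: "snoc_section ?S True = C n p (k - 1)"
    using snoc_section_C_True k bound by simp
  have swap: "swap_pos (e @ [True]) n j = e[j := True] @ [False]" if "j < n" "ones_end e \<le> j" for j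
    using swap_pos_snoc_last_left[of j e True] nth_ge_ones_end[of e j] that len by simp
  have move_iff: "(n, j) \<in> cands ?S ?L (e @ [True]) \<longleftrightarrow>
      j < n \<and> ones_end e \<le> j \<and> (p + 1) * k \<le> Suc j" for j
    using hom_trans_snoc_True_last[of e j] swap[of j] update_True_in_C_iff[OF e k, of j]
      snoc_in_C_iff[of "e[j := True]" False n p k] len
    by (auto simp: cands_def)
  have "i = n" if ij: "(i, j) \<in> cands ?S ?L (e @ [True])" for i j
    using cands_snoc_stuck[OF _ ij] stuck sec ij len
    by (auto simp: cands_def hom_trans_def nth_append)
  moreover have "(p + 1) * k \<ge> 1"
    using k by simp
  then have "(n, ?q) \<in> cands ?S ?L (e @ [True])"
    using move_iff bound end_e by (simp add: max_def, linarith)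
  ultimately have "greedy_next ?S ?L (e @ [True]) = Some (swap_pos (e @ [True]) n ?q)"
    using move_iff by (intro greedy_next_eqI) fastforce+
  then show ?thesis
    using swap[of ?q] bound end_e k by (simp add: insert_one_def)
qed

text \<open>The move out of an exhausted block of words ending in 0: the only homogeneous transposition
  reaching the last position takes the last 1.\<close>

lemma greedy_next_cross_False:
  assumes e: "e \<in> C n p k" and k: "k \<ge> 1" and stuck: "cands (C n p k) Q e = {}"
  shows "greedy_next (C (Suc n) p k) (snoc_each False Q) (e @ [False]) = Some (drop_last_one e @ [True])"
proof -
  let ?S = "C (Suc n) p k" and ?L = "snoc_each (\<not> False) [] @ snoc_each False Q"
  let ?i = "ones_end e - 1"
  have len: "length e = n" and wt: "weight e > 0"
    using e k by (auto simp: C_def)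
  have i: "?i < n" "e ! ?i"
    using ones_end_pos[OF wt] ones_end_le_length[of e] nth_ones_end_minus_1[of e] len by auto
  have swap: "swap_pos (e @ [False]) ?i n = drop_last_one e @ [True]"
    using swap_pos_snoc_last_right[of ?i e False] i len by (simp add: drop_last_one_def)
  have "drop_last_one e @ [True] \<in> ?S"
    using drop_last_one_in_C[OF e k] C_bound[OF e] k snoc_in_C_iff by simp
  moreover have "hom_trans (e @ [False]) ?i n"
    using hom_trans_snoc_False_last[OF wt, of ?i] len by simp
  moreover have "drop_last_one e @ [True] \<notin> set ?L"
    by auto
  ultimately have move: "(?i, n) \<in> cands ?S ?L (e @ [False])"
    using swap by (simp add: cands_def)
  have stuck': "cands (snoc_section ?S False) Q e = {}"
    using stuck by (simp add: snoc_section_C_False)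
  have only: "i = ?i \<and> j = n" if ij: "(i, j) \<in> cands ?S ?L (e @ [False])" for i j
  proof -
    have ht: "hom_trans (e @ [False]) i j"
      using ij by (simp add: cands_def)
    have "\<not> (e @ [False]) ! n"
      using len by (simp add: nth_append)
    then have "i \<noteq> n"
      using ht by (auto simp: hom_trans_def)
    then have "j = n"
      using cands_snoc_stuck[OF stuck' ij] len by auto
    then show ?thesis
      using ht hom_trans_snoc_False_last[OF wt] len by simp
  qed
  have "greedy_next ?S ?L (e @ [False]) = Some (swap_pos (e @ [False]) ?i n)"
    by (rule greedy_next_eqI[OF move]) (use only in blast)
  then show ?thesis
    using swap by simp
qed

text \<open>Starting words for which the greedy list is shown to exhaust \<open>C n p k\<close>.\<close>

inductive full_start :: "nat \<Rightarrow> nat \<Rightarrow> nat \<Rightarrow> bool list \<Rightarrow> bool" for p where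
  full_start_sorted: "(p + 1) * k \<le> n \<Longrightarrow> full_start p n k (sorted_word n k)"
| full_start_snoc_False: "full_start p n k w \<Longrightarrow> full_start p (Suc n) k (w @ [False])"
| full_start_snoc_True: "full_start p n (k - 1) w \<Longrightarrow> k \<ge> 1 \<Longrightarrow> n < (p + 1) * k \<Longrightarrow>
    (p + 1) * k \<le> Suc n \<Longrightarrow> full_start p (Suc n) k (w @ [True])"

lemma full_start_in_C: "full_start p n k w \<Longrightarrow> w \<in> C n p k"
  by (induction rule: full_start.induct) (simp_all add: sorted_word_in_C snoc_in_C_iff)

lemma full_start_snocE:
  assumes "full_start p (Suc n) k (u @ [b])"
  shows "u @ [b] = sorted_word (Suc n) k \<or> (\<not> b \<and> full_start p n k u) \<or>
    (b \<and> full_start p n (k - 1) u \<and> n < (p + 1) * k)"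
  using assms by cases auto

lemma full_start_weight_1: "w \<in> C n p 1 \<Longrightarrow> full_start p n 1 w"
proof (induction n arbitrary: w)
  case 0
  then show ?case
    by (auto simp: C_def)
next
  case (Suc n)
  obtain u b where w: "w = u @ [b]"
    using C_length[OF Suc.prems] by (metis length_Suc_conv_rev)
  show ?case
  proof (cases b)
    case True
    then have "u = sorted_word n 0" "p + 1 \<le> Suc n"
      using Suc.prems w snoc_in_C_iff C_0 sorted_word_0 by auto
    then show ?thesis
      using w True full_start_sorted[of p 1 "Suc n"] sorted_word_Suc[of 0 n] by simp
  next
    case False
    then show ?thesis
      using Suc w snoc_in_C_iff full_start_snoc_False by simp
  qed
qed

text \<open>The last word of the greedy list started at \<open>sorted_word n k\<close>; the case distinction follows
  the one in the induction step of \<open>greedy_run_inv_exists\<close>.\<close>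

fun last_from_sorted :: "nat \<Rightarrow> nat \<Rightarrow> nat \<Rightarrow> bool list" where
  "last_from_sorted p 0 k = []"
| "last_from_sorted p (Suc n) k =
     (if k = 0 then replicate (Suc n) False
      else if n < (p + 1) * k then last_from_sorted p n (k - 1) @ [True]
      else if insert_one p k (last_from_sorted p n (k - 1)) \<noteq> sorted_word n k
      then sorted_word n k @ [False]
      else last_from_sorted p n k @ [False])"

lemma last_from_sorted_0: "last_from_sorted p n 0 = sorted_word n 0"
  by (cases n) (simp_all add: sorted_word_0)

lemma full_start_last_from_sorted: "(p + 1) * k \<le> n \<Longrightarrow> full_start p n k (last_from_sorted p n k)"
proof (induction n arbitrary: k)
  case 0
  then show ?case
    using full_start_sorted[of p 0 0] by (simp add: sorted_word_0)
next
  case (Suc n)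
  consider "k = 0" | "k \<ge> 1" "n < (p + 1) * k" | "k \<ge> 1" "(p + 1) * k \<le> n"
    by linarith
  then show ?case
  proof cases
    case 1
    then show ?thesis
      using full_start_sorted[of p 0 "Suc n"] by (simp add: sorted_word_0)
  next
    case 2
    then have "(p + 1) * (k - 1) \<le> n"
      using Suc.prems by (simp add: algebra_simps)
    then show ?thesis
      using 2 Suc by (simp add: full_start_snoc_True)
  next
    case 3
    then show ?thesis
      using Suc full_start_sorted full_start_snoc_False by simp
  qed
qed

lemma drop_last_one_last_from_sorted:
  "(p + 1) * k \<le> n \<Longrightarrow> k \<ge> 1 \<Longrightarrow> full_start p n (k - 1) (drop_last_one (last_from_sorted p n k))"
proof (induction n arbitrary: k)
  case (Suc n)
  consider "n < (p + 1) * k" | "(p + 1) * k \<le> n" "insert_one p k (last_from_sorted p n (k - 1)) \<noteq> sorted_word n k"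
    | "(p + 1) * k \<le> n" "insert_one p k (last_from_sorted p n (k - 1)) = sorted_word n k"
    by linarith
  then show ?case
  proof cases
    case 1
    have "(p + 1) * (k - 1) \<le> n"
      using Suc.prems by (simp add: algebra_simps)
    then show ?thesis
      using 1 Suc.prems full_start_last_from_sorted full_start_snoc_False
      by (simp add: drop_last_one_snoc_True)
  next
    case 2
    then have eq: "last_from_sorted p (Suc n) k = sorted_word n k @ [False]"
      using Suc.prems by simp
    have "k \<le> (p + 1) * k"
      by simp
    then obtain m k' where nk: "n = Suc m" "k = Suc k'"
      using 2 Suc.prems by (cases n; cases k) auto
    then have "k' \<le> m" "(p + 1) * k' \<le> m"
      using 2 by (simp_all add: algebra_simps)
    then have "drop_last_one (sorted_word n k @ [False]) = drop_last_one (sorted_word m k' @ [True]) @ [False]"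
      using nk drop_last_one_snoc_False[of "sorted_word m k' @ [True]"] by (simp add: sorted_word_Suc)
    then have "drop_last_one (sorted_word n k @ [False]) = (sorted_word m k' @ [False]) @ [False]"
      by (simp add: drop_last_one_snoc_True)
    moreover have "full_start p (Suc (Suc m)) k' ((sorted_word m k' @ [False]) @ [False])"
      using full_start_sorted[of p k' m] \<open>(p + 1) * k' \<le> m\<close>
      by (intro full_start_snoc_False)
    ultimately show ?thesis
      unfolding eq using nk by simp
  next
    case 3
    then have "weight (last_from_sorted p n k) > 0"
      using Suc.prems full_start_in_C[OF full_start_last_from_sorted[of p k n]] by (simp add: C_def)
    then show ?thesis
      using 3 Suc full_start_snoc_False by (simp add: drop_last_one_snoc_False)
  qed
qed simp

lemma insert_one_snoc_False:
  "max (ones_end e) ((p + 1) * k - 1) < length e \<Longrightarrow> insert_one p k (e @ [False]) = insert_one p k e @ [False]"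
  by (simp add: insert_one_def list_update_append)

lemma insert_one_snoc_False_last:
  "(p + 1) * k = Suc (length e) \<Longrightarrow> insert_one p k (e @ [False]) = e @ [True]"
  using ones_end_le_length[of e] by (simp add: insert_one_def list_update_append max_def)

lemma insert_one_last_from_sorted:
  "(p + 1) * (k + 1) \<le> n \<Longrightarrow>
    ones_end (last_from_sorted p n k) < n \<and> full_start p n (k + 1) (insert_one p (k + 1) (last_from_sorted p n k))"
proof (induction n arbitrary: k)
  case (Suc n)
  consider "k = 0" | "k \<ge> 1" "insert_one p k (last_from_sorted p n (k - 1)) \<noteq> sorted_word n k"
    | "k \<ge> 1" "insert_one p k (last_from_sorted p n (k - 1)) = sorted_word n k"
    by linarith
  then show ?case
  proof cases
    case 1
    let ?z = "replicate (Suc n) False"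
    have "ones_end ?z = 0"
      by (simp add: ones_end_def)
    moreover have "?z[p := True] \<in> C (Suc n) p 1"
      using update_True_in_C_iff[of ?z "Suc n" p 1 p] Suc.prems 1 calculation by (simp add: C_0)
    ultimately show ?thesis
      using 1 full_start_weight_1 by (simp add: insert_one_def)
  next
    case 2
    have bound: "(p + 1) * k \<le> n" "k \<le> n"
      using Suc.prems by (simp_all add: algebra_simps)
    then have "last_from_sorted p (Suc n) k = sorted_word n k @ [False]"
      using 2 by simp
    moreover have "insert_one p (k + 1) (sorted_word n k @ [False]) = sorted_word (Suc n) (Suc k)"
      using Suc.prems bound ones_end_sorted_word[of k n] 2 length_sorted_word[of k n]
      by (simp add: insert_one_def list_update_append max_def sorted_word_Suc)
    ultimately show ?thesis
      using Suc.prems ones_end_sorted_word[of k n] 2 bound full_start_sorted[of p "Suc k" "Suc n"] by simp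
  next
    case 3
    let ?e = "last_from_sorted p n k"
    have bound: "(p + 1) * k \<le> n"
      using Suc.prems by (simp add: algebra_simps)
    then have start: "full_start p n k ?e" and len: "length ?e = n"
      using full_start_last_from_sorted C_length full_start_in_C by blast+
    have eq: "last_from_sorted p (Suc n) k = ?e @ [False]"
      using 3 bound by simp
    have "full_start p (Suc n) (k + 1) (insert_one p (k + 1) (?e @ [False]))"
    proof (cases "(p + 1) * (k + 1) \<le> n")
      case True
      then show ?thesis
        using Suc.IH[OF True] len by (simp add: insert_one_snoc_False full_start_snoc_False)
    next
      case False
      then show ?thesis
        using Suc.prems start len bound
        by (simp add: insert_one_snoc_False_last full_start_snoc_True)
    qed
    then show ?thesis
      using eq ones_end_le_length[of ?e] len by simp
  qed
qed simp

text \<open>The strengthened induction hypothesis; the information on the last word and on exhaustion is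
  what determines the crossing move and the end of the list in the induction step.\<close>

definition greedy_run_inv :: "nat \<Rightarrow> nat \<Rightarrow> nat \<Rightarrow> bool list \<Rightarrow> bool list list \<Rightarrow> bool" where
  "greedy_run_inv p n k \<alpha> R \<longleftrightarrow> greedy_run (C n p k) [\<alpha>] R \<and> suffix_partitioned R \<and>
     last R = (if \<alpha> = sorted_word n k then last_from_sorted p n k else sorted_word n k) \<and>
     (full_start p n k \<alpha> \<longrightarrow> set R = C n p k)"

lemma greedy_run_inv_weight_0:
  assumes "\<alpha> \<in> C n p 0"
  shows "greedy_run_inv p n 0 \<alpha> [\<alpha>]"
proof -
  have \<alpha>: "\<alpha> = sorted_word n 0"
    using assms C_0 sorted_word_0 by simp
  have "cands (C n p 0) [\<alpha>] \<alpha> = {}"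
    using assms C_0 by (auto simp: cands_def hom_trans_def)
  then have "greedy_run (C n p 0) [\<alpha>] [\<alpha>]"
    by (intro greedy_run_stop) (simp add: greedy_next_None_iff)
  then show ?thesis
    using \<alpha> C_0 suffix_partitioned_singleton
    by (simp add: greedy_run_inv_def last_from_sorted_0 sorted_word_0)
qed

lemma greedy_run_inv_snoc_True_unsorted:
  assumes IH: "\<And>k \<alpha>. \<alpha> \<in> C m p k \<Longrightarrow> \<exists>R. greedy_run_inv p m k \<alpha> R"
    and \<alpha>: "u @ [True] \<in> C (Suc m) p k" and u: "u \<noteq> sorted_word m (k - 1)"
  shows "\<exists>R. greedy_run_inv p (Suc m) k (u @ [True]) R"
proof -
  let ?S = "C (Suc m) p k"
  have uC: "u \<in> C m p (k - 1)" and k: "k \<ge> 1" and bound: "(p + 1) * k \<le> Suc m"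
    using \<alpha> snoc_in_C_iff by auto
  have "k \<le> (p + 1) * k"
    by simp
  then have km: "k \<le> Suc m"
    using bound by linarith
  have "k \<noteq> 1"
    using uC u C_0 sorted_word_0 by auto
  with k have k2: "k \<ge> 2"
    by simp
  obtain R1 where run1: "greedy_run (C m p (k - 1)) [u] R1" and sp1: "suffix_partitioned R1"
    and last1: "last R1 = sorted_word m (k - 1)" and full1: "full_start p m (k - 1) u \<longrightarrow> set R1 = C m p (k - 1)"
    using IH[OF uC] u by (auto simp: greedy_run_inv_def)
  have sec: "snoc_section ?S True = C m p (k - 1)"
    using snoc_section_C_True k bound by simp
  have "sorted_word m (k - 1) \<noteq> [] \<and> last (sorted_word m (k - 1))"
    using last_sorted_word[of "k - 1" m] k2 km by simp
  then have "greedy_next ?S (snoc_each True R1) (last R1 @ [True]) = None"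
    using greedy_next_snoc_True_blocked[where S = ?S and Q = R1 and P = "[]"] greedy_run_stuck[OF run1] sec last1
    by simp
  then have run: "greedy_run ?S [u @ [True]] (snoc_each True R1)"
    using greedy_run_one_block[where S = ?S and c = True] run1 sec by simp
  have ne: "R1 \<noteq> []"
    using greedy_run_nonempty[OF run1] by simp
  have sorted: "sorted_word (Suc m) k = sorted_word m (k - 1) @ [True]"
    using sorted_word_Suc[of "k - 1" m] k km by simp
  have "set (snoc_each True R1) = ?S" if "full_start p (Suc m) k (u @ [True])"
  proof -
    have "full_start p m (k - 1) u" "m < (p + 1) * k"
      using full_start_snocE[OF that] u sorted by auto
    then have "set R1 = C m p (k - 1)" "C m p k = {}"
      using full1 C_bound by fastforce+
    then show ?thesis
      using C_Suc_eq[OF k bound] by simp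
  qed
  then have "greedy_run_inv p (Suc m) k (u @ [True]) (snoc_each True R1)"
    using run suffix_partitioned_snoc_each[OF sp1] ne last1 sorted u
    by (simp add: greedy_run_inv_def last_map)
  then show ?thesis
    by blast
qed

lemma greedy_run_inv_sorted_tight:
  assumes IH: "\<And>k \<alpha>. \<alpha> \<in> C m p k \<Longrightarrow> \<exists>R. greedy_run_inv p m k \<alpha> R"
    and k: "k \<ge> 1" and tight: "m < (p + 1) * k" "(p + 1) * k \<le> Suc m"
  shows "\<exists>R. greedy_run_inv p (Suc m) k (sorted_word (Suc m) k) R"
proof -
  let ?S = "C (Suc m) p k" and ?u = "sorted_word m (k - 1)"
  have bound: "(p + 1) * (k - 1) \<le> m"
    using tight by (simp add: algebra_simps)
  have "k \<le> (p + 1) * k"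
    by simp
  then have sorted: "sorted_word (Suc m) k = ?u @ [True]"
    using sorted_word_Suc[of "k - 1" m] k tight by simp
  obtain R1 where run1: "greedy_run (C m p (k - 1)) [?u] R1" and sp1: "suffix_partitioned R1"
    and last1: "last R1 = last_from_sorted p m (k - 1)" and full1: "set R1 = C m p (k - 1)"
    using IH[OF sorted_word_in_C[OF bound]] full_start_sorted[OF bound] by (auto simp: greedy_run_inv_def)
  have empty: "C m p k = {}"
    using tight(1) C_bound by fastforce
  have sec: "snoc_section ?S True = C m p (k - 1)"
    using snoc_section_C_True k tight by simp
  have "greedy_next ?S (snoc_each True R1) (last R1 @ [True]) = None"
    using greedy_next_snoc_exhausted[where S = ?S and c = True and Q = R1 and P = "[]"]
      greedy_run_stuck[OF run1] sec empty snoc_section_C_False by simp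
  then have run: "greedy_run ?S [?u @ [True]] (snoc_each True R1)"
    using greedy_run_one_block[where S = ?S and c = True] run1 sec by simp
  have "R1 \<noteq> []"
    using greedy_run_nonempty[OF run1] by simp
  then have "greedy_run_inv p (Suc m) k (sorted_word (Suc m) k) (snoc_each True R1)"
    using run suffix_partitioned_snoc_each[OF sp1] last1 full1 sorted k tight
      C_Suc_eq[OF k tight(2)] empty
    by (simp add: greedy_run_inv_def last_map)
  then show ?thesis
    by blast
qed

lemma greedy_run_inv_sorted_slack:
  assumes IH: "\<And>k \<alpha>. \<alpha> \<in> C m p k \<Longrightarrow> \<exists>R. greedy_run_inv p m k \<alpha> R"
    and k: "k \<ge> 1" and slack: "(p + 1) * k \<le> m"
  shows "\<exists>R. greedy_run_inv p (Suc m) k (sorted_word (Suc m) k) R"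
proof -
  let ?S = "C (Suc m) p k" and ?u = "sorted_word m (k - 1)"
  let ?e = "last_from_sorted p m (k - 1)"
  let ?\<beta> = "insert_one p k ?e"
  have bound: "(p + 1) * (k - 1) \<le> m" "(p + 1) * k \<le> Suc m"
    using slack by (simp_all add: algebra_simps)
  have "k \<le> (p + 1) * k"
    by simp
  then have sorted: "sorted_word (Suc m) k = ?u @ [True]"
    using sorted_word_Suc[of "k - 1" m] k slack by simp
  obtain R1 where run1: "greedy_run (C m p (k - 1)) [?u] R1" and sp1: "suffix_partitioned R1"
    and last1: "last R1 = ?e" and full1: "set R1 = C m p (k - 1)"
    using IH[OF sorted_word_in_C[OF bound(1)]] full_start_sorted[OF bound(1)]
    by (auto simp: greedy_run_inv_def)
  have e: "?e \<in> C m p (k - 1)"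
    using full_start_in_C[OF full_start_last_from_sorted[OF bound(1)]] .
  have "ones_end ?e < m" "full_start p m k ?\<beta>"
    using insert_one_last_from_sorted[of p "k - 1" m] slack k by simp_all
  note \<beta> = this(2) full_start_in_C[OF this(2)]
  obtain R2 where run2: "greedy_run (C m p k) [?\<beta>] R2" and sp2: "suffix_partitioned R2"
    and last2: "last R2 = (if ?\<beta> = sorted_word m k then last_from_sorted p m k else sorted_word m k)"
    and full2: "set R2 = C m p k"
    using IH[OF \<beta>(2)] \<beta>(1) by (auto simp: greedy_run_inv_def)
  have sec: "snoc_section ?S True = C m p (k - 1)" "snoc_section ?S False = C m p k"
    using snoc_section_C_True k bound snoc_section_C_False by simp_all
  have cross: "greedy_next ?S (snoc_each True R1) (last R1 @ [True]) = Some (?\<beta> @ [False])"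
    using greedy_next_cross_True[OF e k slack \<open>ones_end ?e < m\<close>] greedy_run_stuck[OF run1] last1
    by simp
  have stop: "greedy_next ?S (snoc_each True R1 @ snoc_each False R2) (last R2 @ [False]) = None"
    using greedy_next_snoc_exhausted[where S = ?S and c = False and Q = R2 and P = R1]
      greedy_run_stuck[OF run2] sec full1 by simp
  have run: "greedy_run ?S [?u @ [True]] (snoc_each True R1 @ snoc_each False R2)"
    using greedy_run_two_blocks[where S = ?S and c = True] run1 run2 sec cross stop by simp
  have sp: "suffix_partitioned (snoc_each True R1 @ snoc_each False R2)"
    by (rule suffix_partitioned_two_blocks[OF sp1 sp2]) simp
  have "R2 \<noteq> []"
    using greedy_run_nonempty[OF run2] by simp
  then have "greedy_run_inv p (Suc m) k (sorted_word (Suc m) k) (snoc_each True R1 @ snoc_each False R2)"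
    using run sp last2 full1 full2 sorted k slack
      C_Suc_eq[OF k bound(2)]
    by (simp add: greedy_run_inv_def last_map)
  then show ?thesis
    by blast
qed

lemma greedy_run_inv_drop_last_one:
  assumes inv: "greedy_run_inv p m k u R1" and u: "u \<in> C m p k" and k: "k \<ge> 1"
  shows "full_start p m (k - 1) (drop_last_one (last R1))"
    and "k \<ge> 2 \<Longrightarrow> drop_last_one (last R1) \<noteq> sorted_word m (k - 1)"
    and "k = 1 \<or> full_start p (Suc m) k (u @ [False]) \<Longrightarrow> set R1 = C m p k"
proof -
  have run1: "greedy_run (C m p k) [u] R1" and full1: "full_start p m k u \<longrightarrow> set R1 = C m p k"
    and last1: "last R1 = (if u = sorted_word m k then last_from_sorted p m k else sorted_word m k)"
    using inv by (simp_all add: greedy_run_inv_def)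
  have bound: "(p + 1) * k \<le> m"
    using C_bound[OF u] .
  have "k \<le> (p + 1) * k"
    by simp
  then have "k \<le> m"
    using bound by linarith
  then obtain m' k' where mk: "m = Suc m'" "k = Suc k'" "k' \<le> m'"
    using k by (cases m; cases k) auto
  have bound': "(p + 1) * k' \<le> m'"
    using bound mk(1,2) by (simp add: algebra_simps)
  have "last R1 \<in> C m p k"
    using greedy_run_last_in[OF run1] u by simp
  then show "k \<ge> 2 \<Longrightarrow> drop_last_one (last R1) \<noteq> sorted_word m (k - 1)"
    by (rule drop_last_one_ne_sorted_word)
  show "full_start p m (k - 1) (drop_last_one (last R1))"
  proof (cases "u = sorted_word m k")
    case True
    then show ?thesis
      using last1 drop_last_one_last_from_sorted[OF bound k] by simp
  next
    case False
    then have "drop_last_one (last R1) = sorted_word m' k' @ [False]"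
      using last1 mk sorted_word_Suc[of k' m'] by (simp add: drop_last_one_snoc_True)
    then show ?thesis
      using mk bound' full_start_sorted[of p k' m'] full_start_snoc_False by simp
  qed
  assume "k = 1 \<or> full_start p (Suc m) k (u @ [False])"
  moreover have "full_start p m k u" if "full_start p (Suc m) k (u @ [False])"
    using full_start_snocE[OF that] mk sorted_word_Suc[of k' m] by auto
  ultimately show "set R1 = C m p k"
    using full1 full_start_weight_1[of u m p] u by auto
qed

lemma greedy_run_inv_snoc_False:
  assumes IH: "\<And>k \<alpha>. \<alpha> \<in> C m p k \<Longrightarrow> \<exists>R. greedy_run_inv p m k \<alpha> R"
    and \<alpha>: "u @ [False] \<in> C (Suc m) p k" and k: "k \<ge> 1"
  shows "\<exists>R. greedy_run_inv p (Suc m) k (u @ [False]) R"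
proof -
  let ?S = "C (Suc m) p k"
  have uC: "u \<in> C m p k"
    using \<alpha> snoc_in_C_iff by simp
  have bound: "(p + 1) * k \<le> m"
    using C_bound[OF uC] .
  have "k \<le> (p + 1) * k"
    by simp
  then have km: "k \<le> m"
    using bound by linarith
  obtain R1 where inv1: "greedy_run_inv p m k u R1"
    using IH[OF uC] by blast
  then have run1: "greedy_run (C m p k) [u] R1" and sp1: "suffix_partitioned R1"
    by (simp_all add: greedy_run_inv_def)
  let ?\<gamma> = "drop_last_one (last R1)"
  note \<gamma> = greedy_run_inv_drop_last_one[OF inv1 uC k]
  have last1: "last R1 \<in> C m p k"
    using greedy_run_last_in[OF run1] uC by simp
  obtain R2 where run2: "greedy_run (C m p (k - 1)) [?\<gamma>] R2" and sp2: "suffix_partitioned R2"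
    and last2: "last R2 = sorted_word m (k - 1)" and full2: "set R2 = C m p (k - 1)"
    using IH[OF full_start_in_C[OF \<gamma>(1)]] \<gamma>(1,2) k
    by (cases "k = 1") (auto simp: greedy_run_inv_def last_from_sorted_0)
  have sec: "snoc_section ?S False = C m p k" "snoc_section ?S True = C m p (k - 1)"
    using snoc_section_C_False snoc_section_C_True k bound by simp_all
  have cross: "greedy_next ?S (snoc_each False R1) (last R1 @ [False]) = Some (?\<gamma> @ [True])"
    using greedy_next_cross_False[OF last1 k] greedy_run_stuck[OF run1] by simp
  have stop: "greedy_next ?S (snoc_each False R1 @ snoc_each True R2) (last R2 @ [True]) = None"
  proof (cases "k = 1")
    case True
    then show ?thesis
      using greedy_next_snoc_exhausted[where S = ?S and c = True and Q = R2 and P = R1]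
        greedy_run_stuck[OF run2] sec \<gamma>(3) by simp
  next
    case False
    then have "sorted_word m (k - 1) \<noteq> [] \<and> last (sorted_word m (k - 1))"
      using last_sorted_word[of "k - 1" m] k km by simp
    then show ?thesis
      using greedy_next_snoc_True_blocked[where S = ?S and Q = R2 and P = R1]
        greedy_run_stuck[OF run2] sec last2 by simp
  qed
  have run: "greedy_run ?S [u @ [False]] (snoc_each False R1 @ snoc_each True R2)"
    using greedy_run_two_blocks[where S = ?S and c = False] run1 run2 sec cross stop by simp
  have sp: "suffix_partitioned (snoc_each False R1 @ snoc_each True R2)"
    by (rule suffix_partitioned_two_blocks[OF sp1 sp2]) simp
  have sorted: "sorted_word (Suc m) k = sorted_word m (k - 1) @ [True]"
    using sorted_word_Suc[of "k - 1" m] k km by simp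
  have "R2 \<noteq> []"
    using greedy_run_nonempty[OF run2] by simp
  then have "greedy_run_inv p (Suc m) k (u @ [False]) (snoc_each False R1 @ snoc_each True R2)"
    using run sp last2 sorted full2 \<gamma>(3) C_Suc_eq[of k p m] k bound
    by (auto simp: greedy_run_inv_def last_map)
  then show ?thesis
    by blast
qed

lemma greedy_run_inv_exists: "\<alpha> \<in> C n p k \<Longrightarrow> \<exists>R. greedy_run_inv p n k \<alpha> R"
proof (induction n arbitrary: k \<alpha>)
  case 0
  then have "k = 0"
    using C_bound by fastforce
  then show ?case
    using 0 greedy_run_inv_weight_0 by blast
next
  case (Suc m)
  show ?case
  proof (cases "k = 0")
    case True
    then show ?thesis
      using Suc.prems greedy_run_inv_weight_0 by blast
  next
    case False
    then have k: "k \<ge> 1"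
      by simp
    obtain u b where \<alpha>: "\<alpha> = u @ [b]"
      using C_length[OF Suc.prems] by (metis length_Suc_conv_rev)
    show ?thesis
    proof (cases b)
      case False
      then show ?thesis
        using greedy_run_inv_snoc_False[OF Suc.IH] Suc.prems \<alpha> k by simp
    next
      case True
      have bound: "(p + 1) * k \<le> Suc m"
        using C_bound[OF Suc.prems] .
      have "k \<le> (p + 1) * k"
        by simp
      then have "sorted_word (Suc m) k = sorted_word m (k - 1) @ [True]"
        using sorted_word_Suc[of "k - 1" m] k bound by simp
      then show ?thesis
        using greedy_run_inv_snoc_True_unsorted[OF Suc.IH] greedy_run_inv_sorted_tight[OF Suc.IH k]
          greedy_run_inv_sorted_slack[OF Suc.IH k] Suc.prems \<alpha> True bound
        by (cases "u = sorted_word m (k - 1)"; cases "m < (p + 1) * k") auto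
    qed
  qed
qed

theorem lemma4:
  fixes p n k :: nat and \<alpha> :: "bool list"
  assumes "n \<ge> 1" and "n \<ge> (p + 1) * k" and "\<alpha> \<in> C n p k"
  shows "suffix_partitioned (D n p k \<alpha>)"
proof -
  obtain R where "greedy_run (C n p k) [\<alpha>] R" "suffix_partitioned R"
    using greedy_run_inv_exists[OF assms(3)] by (auto simp: greedy_run_inv_def)
  then show ?thesis
    using greedy_eq_greedy_run[OF finite_C assms(3)] by (simp add: D_def)
qed

end
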